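(* Let $[a,b]$ be an interval of length $\ell=b-a+1$ and $\bar y_{a\to b}:=\frac1\ell\sum_{j=a}^by_j$. Let $x_j$ be the predictions of FLH-OGD. Case 1: if the offline optimal takes the form of Structure 1 on $[a,b]$ and $\bar y_{a\to b}\ge B$, then $\sum_{j=a}^b(y_j-x_j)^2-(y_j-u_j)^2\le 10(B+G)^2\log n-\ell(B-u_a)^2$. Case 2: if the offline optimal takes the form of Structure 2 on $[a,b]$ and $\bar y_{a\to b}\le -B$, then $\sum_{j=a}^b(y_j-x_j)^2-(y_j-u_j)^2\le 10(B+G)^2\log n-\ell(B+u_a)^2$.
   Context: Squared loss game: $n\ge 3$, $B\ge 1$, $G\ge B$; for $t=1,\dots,n$ the learner predicts $x_t\in[-B,B]$, then the adversary reveals $y_t\in[-G,G]$. $[a,b]=\{a,\dots,b\}$. FLH-OGD: For each $j\in[n]$ a base learner $E^j$ is started at time $j$; it runs projected online gradient descent on $[-B,B]$ on the losses $x\mapsto (y_t-x)^2$, $t\ge j$: its first prediction $x^{(j)}_j$ is a fixed point of $[-B,B]$, and $x^{(j)}_{t+1}=\Pi\big(x^{(j)}_t-\tfrac{1}{2\tau}\cdot 2(x^{(j)}_t-y_t)\big)$ with $\tau=t-j+1$, $\Pi$ the projection onto $[-B,B]$. The FLH meta-algorithm with learning rate $\zeta$ keeps a probability vector $v_t=(v_t^{(1)},\dots,v_t^{(t)})$, $v_1=(1)$; it predicts $x_t=\sum_{j\le t}v_t^{(j)}x^{(j)}_t$; after $y_t$ is revealed it sets $\hat v^{(i)}_{t+1}=v_t^{(i)}e^{-\zeta(y_t-x_t^{(i)})^2}/\sum_{j\le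 t}v_t^{(j)}e^{-\zeta(y_t-x_t^{(j)})^2}$ for $i\le t$, then $v^{(t+1)}_{t+1}=1/(t+1)$ and $v^{(i)}_{t+1}=(1-\tfrac1{t+1})\hat v^{(i)}_{t+1}$. FLH-OGD uses $\zeta=1/(2(G+B)^2)$. Offline optimal: given $C_n>0$, $u_1,\dots,u_n$ is an optimal solution of: minimize $\frac12\sum_{t=1}^n(y_t-\tilde u_t)^2$ subject to $\sum_{t=2}^{n}|\tilde u_t-\tilde u_{t-1}|\le C_n$ and $-B\le\tilde u_t\le B$; with optimal dual variables $\lambda\ge0$ (TV constraint) and $\gamma^\pm_t\ge0$ (box constraints) satisfying the KKT conditions: there are $s_t\in[-1,1]$ with $s_t=\mathrm{sign}(u_{t+1}-u_t)$ whenever $u_{t+1}\ne u_t$, $s_0=s_n=0$, $u_t-y_t=\lambda(s_t-s_{t-1})+\gamma_t^--\gamma_t^+$, and $\lambda(\sum_{t=2}^n|u_t-u_{t-1}|-C_n)=0$, $\gamma_t^-(u_t+B)=0$, $\gamma_t^+(u_t-B)=0$. Structure 1 on $[a,b]\subseteq\{2,\dots,n-1\}$: $u_j=u_a\in(-B,B)$ for all $j\in[a,b]$, $u_b>u_{b+1}$ and $u_a>u_{a-1}$. Structure 2 on $[a,b]\subseteq\{2,\dots,n-1\}$: $u_j=u_a\in(-B,B)$ for all $j\in[a,b]$, $u_b<u_{b+1}$ and $u_a<u_{a-1}$. *)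

theory Defs
  imports Complex_Main
begin

definition clip :: "real \<Rightarrow> real \<Rightarrow> real" where
  "clip B x = max (- B) (min B x)"

text \<open>Base learner E^j (projected OGD started at time j with initial point c):
  ogd_off y B c j k is its prediction at time j + k.\<close>
primrec ogd_off :: "(nat \<Rightarrow> real) \<Rightarrow> real \<Rightarrow> real \<Rightarrow> nat \<Rightarrow> nat \<Rightarrow> real" where
  "ogd_off y B c j 0 = c"
| "ogd_off y B c j (Suc k) =
     (let p = ogd_off y B c j k; t = j + k; tau = real (t - j + 1)
      in clip B (p - (1 / (2 * tau)) * (2 * (p - y t))))"

text \<open>Prediction x^{(j)}_t of base learner E^j at time t (meaningful for t >= j).\<close>
definition expert :: "(nat \<Rightarrow> real) \<Rightarrow> real \<Rightarrow> real \<Rightarrow> nat \<Rightarrow> nat \<Rightarrow> real" where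
  "expert y B c j t = ogd_off y B c j (t - j)"

fun flh_v :: "(nat \<Rightarrow> real) \<Rightarrow> real \<Rightarrow> real \<Rightarrow> real \<Rightarrow> nat \<Rightarrow> nat \<Rightarrow> real" where
  "flh_v y B c \<zeta> 0 i = 0"
| "flh_v y B c \<zeta> (Suc t) i =
     (if t = 0 then (if i = 1 then 1 else 0)
      else if i = Suc t then 1 / real (Suc t)
      else if 1 \<le> i \<and> i \<le> t then
        (1 - 1 / real (Suc t)) *
        (flh_v y B c \<zeta> t i * exp (- \<zeta> * (y t - expert y B c i t)\<^sup>2) /
         (\<Sum>j\<in>{1..t}. flh_v y B c \<zeta> t j * exp (- \<zeta> * (y t - expert y B c j t)\<^sup>2)))
      else 0)"

definition flh_pred :: "(nat \<Rightarrow> real) \<Rightarrow> real \<Rightarrow> real \<Rightarrow> real \<Rightarrow> nat \<Rightarrow> real" where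
  "flh_pred y B c \<zeta> t = (\<Sum>j\<in>{1..t}. flh_v y B c \<zeta> t j * expert y B c j t)"

definition flh_ogd :: "(nat \<Rightarrow> real) \<Rightarrow> real \<Rightarrow> real \<Rightarrow> real \<Rightarrow> nat \<Rightarrow> real" where
  "flh_ogd y B G c t = flh_pred y B c (1 / (2 * (G + B)\<^sup>2)) t"

definition feasible :: "nat \<Rightarrow> real \<Rightarrow> real \<Rightarrow> (nat \<Rightarrow> real) \<Rightarrow> bool" where
  "feasible n B Cn w \<longleftrightarrow>
     (\<Sum>t\<in>{2..n}. \<bar>w t - w (t - 1)\<bar>) \<le> Cn \<and> (\<forall>t\<in>{1..n}. - B \<le> w t \<and> w t \<le> B)"

definition obj :: "nat \<Rightarrow> (nat \<Rightarrow> real) \<Rightarrow> (nat \<Rightarrow> real) \<Rightarrow> real" where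
  "obj n y w = (1/2) * (\<Sum>t\<in>{1..n}. (y t - w t)\<^sup>2)"

definition offline_opt :: "nat \<Rightarrow> real \<Rightarrow> real \<Rightarrow> (nat \<Rightarrow> real) \<Rightarrow> (nat \<Rightarrow> real) \<Rightarrow> bool" where
  "offline_opt n B Cn y u \<longleftrightarrow>
     feasible n B Cn u \<and> (\<forall>w. feasible n B Cn w \<longrightarrow> obj n y u \<le> obj n y w)"

text \<open>KKT conditions with dual variables lam (TV constraint), gm, gp (box constraints)
  and subgradient signs s.\<close>
definition kkt :: "nat \<Rightarrow> real \<Rightarrow> real \<Rightarrow> (nat \<Rightarrow> real) \<Rightarrow> (nat \<Rightarrow> real) \<Rightarrow> real \<Rightarrow>
                   (nat \<Rightarrow> real) \<Rightarrow> (nat \<Rightarrow> real) \<Rightarrow> (nat \<Rightarrow> real) \<Rightarrow> bool" where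
  "kkt n B Cn y u lam gm gp s \<longleftrightarrow>
     lam \<ge> 0 \<and>
     (\<forall>t\<in>{1..n}. gm t \<ge> 0 \<and> gp t \<ge> 0) \<and>
     (\<forall>t\<in>{0..n}. - 1 \<le> s t \<and> s t \<le> 1) \<and>
     (\<forall>t\<in>{1..<n}. u (t + 1) \<noteq> u t \<longrightarrow> s t = sgn (u (t + 1) - u t)) \<and>
     s 0 = 0 \<and> s n = 0 \<and>
     (\<forall>t\<in>{1..n}. u t - y t = lam * (s t - s (t - 1)) + gm t - gp t) \<and>
     lam * ((\<Sum>t\<in>{2..n}. \<bar>u t - u (t - 1)\<bar>) - Cn) = 0 \<and>
     (\<forall>t\<in>{1..n}. gm t * (u t + B) = 0 \<and> gp t * (u t - B) = 0)"

definition structure1 :: "nat \<Rightarrow> real \<Rightarrow> (nat \<Rightarrow> real) \<Rightarrow> nat \<Rightarrow> nat \<Rightarrow> bool" where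
  "structure1 n B u a b \<longleftrightarrow>
     2 \<le> a \<and> a \<le> b \<and> b \<le> n - 1 \<and>
     (\<forall>j\<in>{a..b}. u j = u a) \<and> - B < u a \<and> u a < B \<and>
     u b > u (b + 1) \<and> u a > u (a - 1)"

definition structure2 :: "nat \<Rightarrow> real \<Rightarrow> (nat \<Rightarrow> real) \<Rightarrow> nat \<Rightarrow> nat \<Rightarrow> bool" where
  "structure2 n B u a b \<longleftrightarrow>
     2 \<le> a \<and> a \<le> b \<and> b \<le> n - 1 \<and>
     (\<forall>j\<in>{a..b}. u j = u a) \<and> - B < u a \<and> u a < B \<and>
     u b < u (b + 1) \<and> u a < u (a - 1)"

end

theory Submission
  imports Defs "HOL-Analysis.Analysis"
begin

text \<open>
  Since \<open>u\<close> is constant on \<open>[a,b]\<close>, the regret against \<open>u\<close> equals the regret against the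
  fixed comparator \<open>w = B\<close> (resp. \<open>w = -B\<close>) minus \<open>\<ell> (w - u\<^sub>a)\<^sup>2\<close> and a term
  \<open>2 (w - u\<^sub>a) (\<Sum> y - \<ell> w)\<close>, which is nonnegative exactly because the mean of \<open>y\<close> on
  \<open>[a,b]\<close> lies beyond \<open>w\<close>. The regret against a fixed point is split at the base learner
  \<open>E\<^sup>a\<close> started at time \<open>a\<close>: the loss \<open>(y - x)\<^sup>2\<close> is \<open>\<zeta>\<close>-exp-concave on the relevant range, so
  the FLH weight of \<open>E\<^sup>a\<close> bounds the exponentiated meta-regret and gives \<open>2 (B + G)\<^sup>2 ln n\<close>,
  and projected gradient descent with step sizes \<open>1 / (2 \<tau>)\<close> on the \<open>2\<close>-strongly convex
  losses has regret at most \<open>(B + G)\<^sup>2\<close> times a harmonic number.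
\<close>

lemma exp_neg_sq_concave_on:
  fixes \<alpha> y R :: real
  assumes "0 < \<alpha>" and "2 * \<alpha> * R\<^sup>2 \<le> 1"
  shows "concave_on {y - R..y + R} (\<lambda>x. exp (- \<alpha> * (y - x)\<^sup>2))"
proof (rule f''_le0_imp_concave[where f' = "\<lambda>x. exp (- \<alpha> * (y - x)\<^sup>2) * (2 * \<alpha> * (y - x))"
      and f'' = "\<lambda>x. exp (- \<alpha> * (y - x)\<^sup>2) * (4 * \<alpha>\<^sup>2 * (y - x)\<^sup>2 - 2 * \<alpha>)"])
  fix x assume x: "x \<in> {y - R..y + R}"
  show "DERIV (\<lambda>x. exp (- \<alpha> * (y - x)\<^sup>2)) x :> exp (- \<alpha> * (y - x)\<^sup>2) * (2 * \<alpha> * (y - x))"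
    by (rule derivative_eq_intros refl | simp add: power2_eq_square algebra_simps)+
  show "DERIV (\<lambda>x. exp (- \<alpha> * (y - x)\<^sup>2) * (2 * \<alpha> * (y - x))) x
          :> exp (- \<alpha> * (y - x)\<^sup>2) * (4 * \<alpha>\<^sup>2 * (y - x)\<^sup>2 - 2 * \<alpha>)"
    by (rule derivative_eq_intros refl | simp add: power2_eq_square algebra_simps)+
  have "\<bar>y - x\<bar> \<le> \<bar>R\<bar>"
    using x by auto
  then have "(y - x)\<^sup>2 \<le> R\<^sup>2"
    by (simp add: abs_le_square_iff)
  then have "2 * \<alpha> * (y - x)\<^sup>2 \<le> 2 * \<alpha> * R\<^sup>2"
    using assms(1) by (intro mult_left_mono) auto
  then have "2 * \<alpha> * (y - x)\<^sup>2 \<le> 1"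
    using assms(2) by linarith
  then have "2 * \<alpha> * (2 * \<alpha> * (y - x)\<^sup>2) \<le> 2 * \<alpha>"
    using assms(1) by (simp add: mult_left_le)
  then have "4 * \<alpha>\<^sup>2 * (y - x)\<^sup>2 \<le> 2 * \<alpha>"
    by (simp add: power2_eq_square mult.assoc)
  then show "exp (- \<alpha> * (y - x)\<^sup>2) * (4 * \<alpha>\<^sup>2 * (y - x)\<^sup>2 - 2 * \<alpha>) \<le> 0"
    by (simp add: mult_nonneg_nonpos)
qed simp

lemma sum_mult_pos_of_distribution:
  fixes p e :: "'a \<Rightarrow> real"
  assumes "finite A" and "\<And>i. i \<in> A \<Longrightarrow> 0 \<le> p i" and "sum p A = 1"
    and "\<And>i. i \<in> A \<Longrightarrow> 0 < e i"
  shows "0 < (\<Sum>i\<in>A. p i * e i)"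
proof -
  obtain i where i: "i \<in> A" "p i \<noteq> 0"
    using assms(3) by (metis sum.neutral zero_neq_one)
  show ?thesis
    using i assms by (intro sum_pos2[OF assms(1) i(1)]) (auto simp: order.not_eq_order_implies_strict less_imp_le)
qed

lemma flh_v_distribution:
  assumes "1 \<le> t"
  shows "(\<forall>i. 0 \<le> flh_v y B c \<zeta> t i) \<and> (\<Sum>i\<in>{1..t}. flh_v y B c \<zeta> t i) = 1"
  using assms
proof (induction t rule: dec_induct)
  case base
  then show ?case by simp
next
  case (step t)
  define v where "v = flh_v y B c \<zeta> t"
  define e where "e = (\<lambda>j. exp (- \<zeta> * (y t - expert y B c j t)\<^sup>2))"
  define Z where "Z = (\<Sum>j\<in>{1..t}. v j * e j)"
  have v_nonneg: "\<And>i. 0 \<le> v i" and v_sum: "sum v {1..t} = 1"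
    using step.IH unfolding v_def by blast+
  have "0 < Z"
    unfolding Z_def by (rule sum_mult_pos_of_distribution[OF _ _ v_sum]) (auto simp: v_nonneg e_def)
  have update: "flh_v y B c \<zeta> (Suc t) i = (1 - 1 / real (Suc t)) * (v i * e i / Z)"
    if "i \<in> {1..t}" for i
    using that step.hyps unfolding v_def e_def Z_def by simp
  have "(\<Sum>i\<in>{1..t}. flh_v y B c \<zeta> (Suc t) i) = (\<Sum>i\<in>{1..t}. (1 - 1 / real (Suc t)) * (v i * e i / Z))"
    by (rule sum.cong[OF refl update])
  also have "\<dots> = (1 - 1 / real (Suc t)) * ((\<Sum>i\<in>{1..t}. v i * e i) / Z)"
    by (simp only: sum_distrib_left sum_divide_distrib)
  also have "\<dots> = 1 - 1 / real (Suc t)"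
    using \<open>0 < Z\<close> unfolding Z_def by simp
  finally have "(\<Sum>i\<in>{1..Suc t}. flh_v y B c \<zeta> (Suc t) i) = 1"
    using step.hyps by simp
  moreover have "0 \<le> flh_v y B c \<zeta> (Suc t) i" for i
  proof (cases "i \<in> {1..t}")
    case True
    then show ?thesis
      using \<open>0 < Z\<close> v_nonneg[of i] by (simp only: update) (simp add: e_def)
  qed (use step.hyps in auto)
  ultimately show ?case by blast
qed

lemma flh_v_nonneg: "0 \<le> flh_v y B c \<zeta> t i"
  by (cases t) (use flh_v_distribution[of "Suc _"] in auto)

lemma flh_v_sum_eq_1: "1 \<le> t \<Longrightarrow> (\<Sum>i\<in>{1..t}. flh_v y B c \<zeta> t i) = 1"
  using flh_v_distribution by blast

lemma flh_v_le_1: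
  assumes "i \<in> {1..t}"
  shows "flh_v y B c \<zeta> t i \<le> 1"
proof -
  have "flh_v y B c \<zeta> t i \<le> (\<Sum>j\<in>{1..t}. flh_v y B c \<zeta> t j)"
    using assms by (intro member_le_sum) (auto simp: flh_v_nonneg)
  moreover have "1 \<le> t"
    using assms by simp
  ultimately show ?thesis
    using flh_v_sum_eq_1 by fastforce
qed

lemma flh_v_diag: "1 \<le> t \<Longrightarrow> flh_v y B c \<zeta> t t = 1 / real t"
  by (cases t) auto

lemma flh_v_Suc_scaled:
  assumes "1 \<le> t" and "i \<in> {1..t}"
  shows "real (Suc t) * flh_v y B c \<zeta> (Suc t) i
           = real t * flh_v y B c \<zeta> t i * exp (- \<zeta> * (y t - expert y B c i t)\<^sup>2)
             / (\<Sum>j\<in>{1..t}. flh_v y B c \<zeta> t j * exp (- \<zeta> * (y t - expert y B c j t)\<^sup>2))"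
proof -
  have "real (Suc t) * (1 - 1 / real (Suc t)) = real t"
    by (simp add: field_simps)
  then show ?thesis
    using assms by (simp add: mult.assoc[symmetric])
qed

lemma ogd_off_bounded: "- B \<le> c \<Longrightarrow> c \<le> B \<Longrightarrow> \<bar>ogd_off y B c j k\<bar> \<le> B"
  by (induction k) (auto simp: clip_def Let_def)

lemma expert_bounded: "- B \<le> c \<Longrightarrow> c \<le> B \<Longrightarrow> \<bar>expert y B c j t\<bar> \<le> B"
  unfolding expert_def by (rule ogd_off_bounded)

lemma flh_mixture_exp_loss_le:
  assumes "1 \<le> t" and "\<bar>y t\<bar> \<le> G" and "- B \<le> c" and "c \<le> B"
    and "0 < \<zeta>" and "2 * \<zeta> * (G + B)\<^sup>2 \<le> 1"
  shows "(\<Sum>j\<in>{1..t}. flh_v y B c \<zeta> t j * exp (- \<zeta> * (y t - expert y B c j t)\<^sup>2))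
           \<le> exp (- \<zeta> * (y t - flh_pred y B c \<zeta> t)\<^sup>2)"
proof -
  have "expert y B c j t \<in> {y t - (G + B)..y t + (G + B)}" for j
    using expert_bounded[OF assms(3,4), of y j t] assms(2) by (auto simp: abs_le_iff)
  then have "(\<Sum>j\<in>{1..t}. flh_v y B c \<zeta> t j * exp (- \<zeta> * (y t - expert y B c j t)\<^sup>2))
      \<le> exp (- \<zeta> * (y t - (\<Sum>j\<in>{1..t}. flh_v y B c \<zeta> t j *\<^sub>R expert y B c j t))\<^sup>2)"
    using assms(1) flh_v_sum_eq_1[OF assms(1)]
    by (intro concave_on_sum[OF _ _ exp_neg_sq_concave_on[OF assms(5,6)]])
      (auto simp: flh_v_nonneg)
  then show ?thesis
    by (simp add: flh_pred_def)
qed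

text \<open>The weight of \<open>E\<^sup>a\<close>, rescaled by the current time, grows in each round at least by
  the factor \<open>exp (\<zeta> * (loss of FLH - loss of E\<^sup>a))\<close>, because by exp-concavity the
  normaliser of the update is at most \<open>exp (- \<zeta> * loss of FLH)\<close>.\<close>
lemma flh_exp_regret_le:
  assumes "1 \<le> a" and "a \<le> m" and "\<forall>t\<in>{a..<m}. \<bar>y t\<bar> \<le> G"
    and "- B \<le> c" and "c \<le> B" and "0 < \<zeta>" and "2 * \<zeta> * (G + B)\<^sup>2 \<le> 1"
  shows "exp (\<zeta> * (\<Sum>t\<in>{a..<m}. (y t - flh_pred y B c \<zeta> t)\<^sup>2 - (y t - expert y B c a t)\<^sup>2))
           \<le> real m * flh_v y B c \<zeta> m a"
  using assms(2,3)
proof (induction m rule: dec_induct)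
  case base
  then show ?case
    using assms(1) by (simp add: flh_v_diag)
next
  case (step m)
  have "1 \<le> m"
    using assms(1) step.hyps by simp
  define e where "e = (\<lambda>j. exp (- \<zeta> * (y m - expert y B c j m)\<^sup>2))"
  define Z where "Z = (\<Sum>j\<in>{1..m}. flh_v y B c \<zeta> m j * e j)"
  define R where "R = (\<Sum>t\<in>{a..<m}. (y t - flh_pred y B c \<zeta> t)\<^sup>2 - (y t - expert y B c a t)\<^sup>2)"
  define L where "L = exp (- \<zeta> * (y m - flh_pred y B c \<zeta> m)\<^sup>2)"
  have IH: "exp (\<zeta> * R) \<le> real m * flh_v y B c \<zeta> m a"
    using step unfolding R_def by simp
  have "0 < Z"
    unfolding Z_def e_def using flh_v_sum_eq_1[OF \<open>1 \<le> m\<close>]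
    by (intro sum_mult_pos_of_distribution) (auto simp: flh_v_nonneg)
  have "Z \<le> L"
    unfolding Z_def e_def L_def
    using step.prems step.hyps assms by (intro flh_mixture_exp_loss_le) auto
  have "exp (\<zeta> * (\<Sum>t\<in>{a..<Suc m}. (y t - flh_pred y B c \<zeta> t)\<^sup>2 - (y t - expert y B c a t)\<^sup>2))
      = exp (\<zeta> * R) * (e a / L)"
    using step.hyps unfolding R_def e_def L_def
    by (simp add: distrib_left exp_add exp_diff exp_minus field_simps)
  also have "\<dots> \<le> real m * flh_v y B c \<zeta> m a * (e a / L)"
    using IH by (rule mult_right_mono) (simp add: e_def L_def)
  also have "\<dots> \<le> real m * flh_v y B c \<zeta> m a * (e a / Z)"
    using \<open>0 < Z\<close> \<open>Z \<le> L\<close>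
    by (intro mult_left_mono divide_left_mono) (auto simp: e_def flh_v_nonneg)
  also have "\<dots> = real (Suc m) * flh_v y B c \<zeta> (Suc m) a"
    using \<open>1 \<le> m\<close> step.hyps assms(1) unfolding Z_def e_def
    by (subst flh_v_Suc_scaled) auto
  finally show ?case .
qed

lemma flh_regret_vs_expert_le:
  assumes "1 \<le> a" and "a \<le> b" and "\<forall>t\<in>{a..b}. \<bar>y t\<bar> \<le> G"
    and "- B \<le> c" and "c \<le> B" and "0 < \<zeta>" and "2 * \<zeta> * (G + B)\<^sup>2 \<le> 1"
  shows "(\<Sum>t\<in>{a..b}. (y t - flh_pred y B c \<zeta> t)\<^sup>2 - (y t - expert y B c a t)\<^sup>2)
           \<le> ln (real (b + 1)) / \<zeta>"
proof -
  define R where "R = (\<Sum>t\<in>{a..b}. (y t - flh_pred y B c \<zeta> t)\<^sup>2 - (y t - expert y B c a t)\<^sup>2)"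
  have "{a..<b + 1} = {a..b}"
    by auto
  then have "exp (\<zeta> * R) \<le> real (b + 1) * flh_v y B c \<zeta> (b + 1) a"
    using flh_exp_regret_le[of a "b + 1"] assms unfolding R_def by simp
  also have "\<dots> \<le> real (b + 1)"
    using assms(1,2) by (intro mult_left_le flh_v_le_1) auto
  finally have "ln (exp (\<zeta> * R)) \<le> ln (real (b + 1))"
    by (subst ln_le_cancel_iff) auto
  then have "\<zeta> * R \<le> ln (real (b + 1))"
    by simp
  then show ?thesis
    unfolding R_def using assms(6) by (simp add: field_simps)
qed

lemma clip_dist_le: "\<bar>w\<bar> \<le> B \<Longrightarrow> \<bar>clip B z - w\<bar> \<le> \<bar>z - w\<bar>"
  by (auto simp: clip_def abs_le_iff)

lemma ogd_off_Suc_eq: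
  "ogd_off y B c j (Suc k)
     = clip B (ogd_off y B c j k - (ogd_off y B c j k - y (j + k)) / (real k + 1))"
proof -
  have "real (j + k - j + 1) = real k + 1"
    by simp
  then show ?thesis
    by (simp only: ogd_off.simps Let_def) (rule arg_cong[where f = "clip B"], simp add: field_simps)
qed

text \<open>One step of gradient descent with step size \<open>1 / (2 * M)\<close> on the loss \<open>(y' - x)\<^sup>2\<close>, from
  \<open>p\<close> to (a point \<open>q\<close> no farther from \<open>w\<close> than) \<open>p - (p - y') / M\<close>.\<close>
lemma sq_loss_descent_step:
  fixes M p q w y' :: real
  assumes "0 < M" and "\<bar>q - w\<bar> \<le> \<bar>p - (p - y') / M - w\<bar>"
  shows "(y' - p)\<^sup>2 - (y' - w)\<^sup>2 \<le> (M - 1) * (p - w)\<^sup>2 - M * (q - w)\<^sup>2 + (p - y')\<^sup>2 / M"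
proof -
  have "M * (q - w)\<^sup>2 \<le> M * (p - (p - y') / M - w)\<^sup>2"
    using assms by (intro mult_left_mono) (auto simp: abs_le_square_iff)
  also have "\<dots> = M * (p - w)\<^sup>2 - 2 * (p - w) * (p - y') + (p - y')\<^sup>2 / M"
    using assms(1) by (simp add: power2_eq_square field_simps)
  finally show ?thesis
    by (simp add: power2_eq_square algebra_simps)
qed

lemma ogd_regret_le:
  assumes "\<bar>w\<bar> \<le> B" and "- B \<le> c" and "c \<le> B" and "\<forall>t\<in>{a..<a + m}. \<bar>y t\<bar> \<le> G"
  shows "(\<Sum>t\<in>{a..<a + m}. (y t - expert y B c a t)\<^sup>2 - (y t - w)\<^sup>2)
           \<le> (B + G)\<^sup>2 * harm m - real m * (ogd_off y B c a m - w)\<^sup>2"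
  using assms(4)
proof (induction m)
  case 0
  then show ?case by (simp add: harm_def)
next
  case (Suc m)
  define p where "p = ogd_off y B c a m"
  define q where "q = ogd_off y B c a (Suc m)"
  have "\<bar>y (a + m)\<bar> \<le> G"
    using Suc.prems by simp
  moreover have "\<bar>p\<bar> \<le> B"
    unfolding p_def using assms(2,3) by (rule ogd_off_bounded)
  ultimately have "(p - y (a + m))\<^sup>2 \<le> (B + G)\<^sup>2"
    by (intro abs_le_square_iff[THEN iffD1]) auto
  then have "(p - y (a + m))\<^sup>2 / (real m + 1) \<le> (B + G)\<^sup>2 / (real m + 1)"
    by (intro divide_right_mono) auto
  moreover have "(y (a + m) - p)\<^sup>2 - (y (a + m) - w)\<^sup>2
      \<le> real m * (p - w)\<^sup>2 - (real m + 1) * (q - w)\<^sup>2 + (p - y (a + m))\<^sup>2 / (real m + 1)"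
    using sq_loss_descent_step[of "real m + 1" q w p "y (a + m)"] clip_dist_le[OF assms(1)]
    unfolding q_def p_def ogd_off_Suc_eq by simp
  ultimately have step: "(y (a + m) - p)\<^sup>2 - (y (a + m) - w)\<^sup>2
      \<le> real m * (p - w)\<^sup>2 - (real m + 1) * (q - w)\<^sup>2 + (B + G)\<^sup>2 / (real m + 1)"
    by linarith
  have IH: "(\<Sum>t\<in>{a..<a + m}. (y t - expert y B c a t)\<^sup>2 - (y t - w)\<^sup>2)
      \<le> (B + G)\<^sup>2 * harm m - real m * (p - w)\<^sup>2"
    using Suc unfolding p_def by simp
  have "expert y B c a (a + m) = p"
    unfolding expert_def p_def by simp
  then have "(\<Sum>t\<in>{a..<a + Suc m}. (y t - expert y B c a t)\<^sup>2 - (y t - w)\<^sup>2)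
      = (\<Sum>t\<in>{a..<a + m}. (y t - expert y B c a t)\<^sup>2 - (y t - w)\<^sup>2)
        + ((y (a + m) - p)\<^sup>2 - (y (a + m) - w)\<^sup>2)"
    by simp
  also have "\<dots> \<le> (B + G)\<^sup>2 * harm (Suc m) - real (Suc m) * (q - w)\<^sup>2"
    using IH step by (simp add: harm_Suc distrib_left divide_inverse add.commute)
  finally show ?case
    unfolding q_def .
qed

lemma harm_le_1_plus_ln: "1 \<le> m \<Longrightarrow> (harm m :: real) \<le> 1 + ln (real m)"
  using euler_mascheroni_sequence_decreasing[of 1 m] by (simp add: harm_def)

lemma flh_ogd_regret_le:
  assumes "3 \<le> n" and "0 < B" and "\<bar>w\<bar> \<le> B" and "- B \<le> c" and "c \<le> B"
    and "1 \<le> a" and "a \<le> b" and "b < n" and "\<forall>t\<in>{a..b}. \<bar>y t\<bar> \<le> G"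
  shows "(\<Sum>j\<in>{a..b}. (y j - flh_ogd y B G c j)\<^sup>2 - (y j - w)\<^sup>2) \<le> 10 * (B + G)\<^sup>2 * ln (real n)"
proof -
  define K where "K = (B + G)\<^sup>2"
  define \<zeta> where "\<zeta> = 1 / (2 * (G + B)\<^sup>2)"
  define l where "l = b - a + 1"
  have "0 \<le> G"
    using assms(7,9) by force
  then have "0 < K" and \<zeta>_K: "\<zeta> = 1 / (2 * K)"
    using assms(2) by (auto simp: K_def \<zeta>_def add.commute)
  have "1 \<le> ln (real n)"
    using exp_le assms(1) by (subst ln_ge_iff) auto
  have "(\<Sum>j\<in>{a..b}. (y j - flh_pred y B c \<zeta> j)\<^sup>2 - (y j - expert y B c a j)\<^sup>2) \<le> ln (real (b + 1)) / \<zeta>"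
    using assms by (intro flh_regret_vs_expert_le) (auto simp: \<zeta>_def add.commute)
  also have "\<dots> \<le> 2 * K * ln (real n)"
    using assms(8) \<open>0 < K\<close> by (simp add: \<zeta>_K)
  finally have meta: "(\<Sum>j\<in>{a..b}. (y j - flh_pred y B c \<zeta> j)\<^sup>2 - (y j - expert y B c a j)\<^sup>2)
      \<le> 2 * K * ln (real n)" .
  have "{a..<a + l} = {a..b}"
    using assms(7) by (auto simp: l_def)
  then have "(\<Sum>j\<in>{a..b}. (y j - expert y B c a j)\<^sup>2 - (y j - w)\<^sup>2)
      \<le> K * harm l - real l * (ogd_off y B c a l - w)\<^sup>2"
    using ogd_regret_le[OF assms(3-5), of a l y G] assms(9) unfolding K_def by simp
  also have "\<dots> \<le> K * harm l"
    by simp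
  also have "\<dots> \<le> K * (1 + ln (real n))"
  proof -
    have "1 \<le> l" and "l \<le> n"
      using assms(7,8) by (auto simp: l_def)
    moreover have "ln (real l) \<le> ln (real n)"
      using \<open>1 \<le> l\<close> \<open>l \<le> n\<close> by simp
    ultimately have "harm l \<le> 1 + ln (real n)"
      using harm_le_1_plus_ln[of l] by linarith
    then show ?thesis
      using \<open>0 < K\<close> by (intro mult_left_mono) auto
  qed
  finally have base: "(\<Sum>j\<in>{a..b}. (y j - expert y B c a j)\<^sup>2 - (y j - w)\<^sup>2) \<le> K * (1 + ln (real n))" .
  have "(\<Sum>j\<in>{a..b}. (y j - flh_ogd y B G c j)\<^sup>2 - (y j - w)\<^sup>2)
      = (\<Sum>j\<in>{a..b}. (y j - flh_pred y B c \<zeta> j)\<^sup>2 - (y j - expert y B c a j)\<^sup>2)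
        + (\<Sum>j\<in>{a..b}. (y j - expert y B c a j)\<^sup>2 - (y j - w)\<^sup>2)"
    unfolding flh_ogd_def \<zeta>_def by (simp add: sum.distrib[symmetric])
  also have "\<dots> \<le> 2 * K * ln (real n) + K * (1 + ln (real n))"
    using meta base by (rule add_mono)
  also have "\<dots> \<le> 10 * K * ln (real n)"
    using mult_left_mono[OF \<open>1 \<le> ln (real n)\<close>, of K] \<open>0 < K\<close> by (simp add: algebra_simps)
  finally show ?thesis
    unfolding K_def .
qed

lemma sum_sq_loss_diff_const_comparator_le:
  fixes x y u :: "'a \<Rightarrow> real"
  assumes "\<forall>j\<in>A. u j = v" and "0 \<le> (w - v) * ((\<Sum>j\<in>A. y j) - real (card A) * w)"
  shows "(\<Sum>j\<in>A. (y j - x j)\<^sup>2 - (y j - u j)\<^sup>2)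
           \<le> (\<Sum>j\<in>A. (y j - x j)\<^sup>2 - (y j - w)\<^sup>2) - real (card A) * (w - v)\<^sup>2"
proof -
  have "(\<Sum>j\<in>A. (y j - x j)\<^sup>2 - (y j - u j)\<^sup>2)
      = (\<Sum>j\<in>A. ((y j - x j)\<^sup>2 - (y j - w)\<^sup>2) - ((w - v)\<^sup>2 + 2 * (w - v) * (y j - w)))"
    using assms(1) by (intro sum.cong) (auto simp: power2_eq_square algebra_simps)
  also have "\<dots> = (\<Sum>j\<in>A. (y j - x j)\<^sup>2 - (y j - w)\<^sup>2) - real (card A) * (w - v)\<^sup>2
      - 2 * ((w - v) * ((\<Sum>j\<in>A. y j) - real (card A) * w))"
    by (simp add: sum_subtractf sum.distrib sum_distrib_left algebra_simps)
  finally show ?thesis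
    using assms(2) by linarith
qed

theorem lemma6:
  fixes n a b :: nat and B G Cn c lam :: real and y u gm gp s :: "nat \<Rightarrow> real"
  assumes "n \<ge> 3" and "B \<ge> 1" and "G \<ge> B"
    and "\<forall>t\<in>{1..n}. \<bar>y t\<bar> \<le> G"
    and "- B \<le> c" and "c \<le> B"
    and "Cn > 0"
    and "offline_opt n B Cn y u"
    and "kkt n B Cn y u lam gm gp s"
  shows "(structure1 n B u a b \<and> (\<Sum>j\<in>{a..b}. y j) / real (b - a + 1) \<ge> B \<longrightarrow>
            (\<Sum>j\<in>{a..b}. (y j - flh_ogd y B G c j)\<^sup>2 - (y j - u j)\<^sup>2)
              \<le> 10 * (B + G)\<^sup>2 * ln (real n) - real (b - a + 1) * (B - u a)\<^sup>2)
       \<and> (structure2 n B u a b \<and> (\<Sum>j\<in>{a..b}. y j) / real (b - a + 1) \<le> - B \<longrightarrow>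
            (\<Sum>j\<in>{a..b}. (y j - flh_ogd y B G c j)\<^sup>2 - (y j - u j)\<^sup>2)
              \<le> 10 * (B + G)\<^sup>2 * ln (real n) - real (b - a + 1) * (B + u a)\<^sup>2)"
proof -
  have regret: "(\<Sum>j\<in>{a..b}. (y j - flh_ogd y B G c j)\<^sup>2 - (y j - w)\<^sup>2) \<le> 10 * (B + G)\<^sup>2 * ln (real n)"
    if "\<bar>w\<bar> \<le> B" and "2 \<le> a" and "a \<le> b" and "b \<le> n - 1" for w
    using that assms(1-6) by (intro flh_ogd_regret_le) auto
  have card: "real (card {a..b}) = real (b - a + 1)" if "a \<le> b"
    using that by (simp add: Suc_diff_le)
  show ?thesis
  proof (intro conjI impI)
    assume case1: "structure1 n B u a b \<and> (\<Sum>j\<in>{a..b}. y j) / real (b - a + 1) \<ge> B"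
    then have s: "2 \<le> a" "a \<le> b" "b \<le> n - 1" "\<forall>j\<in>{a..b}. u j = u a" "u a < B"
      unfolding structure1_def by blast+
    have "B * real (b - a + 1) \<le> (\<Sum>j\<in>{a..b}. y j)"
      using case1 pos_le_divide_eq[of "real (b - a + 1)"] by simp
    then have "0 \<le> (B - u a) * ((\<Sum>j\<in>{a..b}. y j) - real (card {a..b}) * B)"
      using s(5) unfolding card[OF s(2)] by (intro mult_nonneg_nonneg) (auto simp: mult.commute)
    from sum_sq_loss_diff_const_comparator_le[OF s(4) this, where x = "flh_ogd y B G c"]
    show "(\<Sum>j\<in>{a..b}. (y j - flh_ogd y B G c j)\<^sup>2 - (y j - u j)\<^sup>2)
        \<le> 10 * (B + G)\<^sup>2 * ln (real n) - real (b - a + 1) * (B - u a)\<^sup>2"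
      using regret[of B] s(1-3) assms(2) unfolding card[OF s(2)] by simp
  next
    assume case2: "structure2 n B u a b \<and> (\<Sum>j\<in>{a..b}. y j) / real (b - a + 1) \<le> - B"
    then have s: "2 \<le> a" "a \<le> b" "b \<le> n - 1" "\<forall>j\<in>{a..b}. u j = u a" "- B < u a"
      unfolding structure2_def by blast+
    have "(\<Sum>j\<in>{a..b}. y j) \<le> - B * real (b - a + 1)"
      using case2 pos_divide_le_eq[of "real (b - a + 1)"] by simp
    then have "0 \<le> (- B - u a) * ((\<Sum>j\<in>{a..b}. y j) - real (card {a..b}) * - B)"
      using s(5) unfolding card[OF s(2)] by (intro mult_nonpos_nonpos) (auto simp: mult.commute)
    from sum_sq_loss_diff_const_comparator_le[OF s(4) this, where x = "flh_ogd y B G c"]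
    show "(\<Sum>j\<in>{a..b}. (y j - flh_ogd y B G c j)\<^sup>2 - (y j - u j)\<^sup>2)
        \<le> 10 * (B + G)\<^sup>2 * ln (real n) - real (b - a + 1) * (B + u a)\<^sup>2"
      using regret[of "- B"] s(1-3) assms(2) unfolding card[OF s(2)]
      by (simp add: power2_commute[of "- B"] add.commute[of B])
  qed
qed

end
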